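(* For every bipartite quantum channel $\mathcal N\in\mathrm{Ch}(A'B',AB)$, \[ S^{\not\to}_\infty[A|B]_{\mathcal N}=S^\downarrow_\infty(A|R_AR_BB)_{\Phi^{\mathcal N}}. \]
   Context: All systems are finite-dimensional; $\log$ base 2; $\mathrm{St}(X)$ density operators; $\mathrm{Ch}(X',X)$ quantum channels. Maximally entangled state $\Phi_{RX}:=\frac1{|X|}\sum_{i,j}|ii\rangle\langle jj|$; Choi state of $\mathcal N\in\mathrm{Ch}(A'B',AB)$: $\Phi^{\mathcal N}_{R_AAR_BB}:=(\mathrm{id}\otimes\mathcal N)(\Phi_{R_AA'}\otimes\Phi_{R_BB'})$, $R_A\simeq A'$, $R_B\simeq B'$. $D_\infty(\rho\|\sigma):=\log\inf\{\lambda:\rho\le\lambda\sigma\}$; for a channel $\mathcal M$ and CP map $\mathcal M'$, $D_\infty[\mathcal M\|\mathcal M']:=\sup_{\rho\in\mathrm{St}(RX')}D_\infty((\mathrm{id}\otimes\mathcal M)(\rho)\|(\mathrm{id}\otimes\mathcal M')(\rho))$. NS conditional min-entropy: $S^{\not\to}_\infty[A|B]_{\mathcal N}:=-D_\infty[\mathcal N\|\mathcal R^{\mathbb1}_{A\to A}\circ\mathcal N]$, where $(\mathcal R^{\mathbb1}_{A\to A}\circ\mathcal N)(X)=\mathbb 1_A\otimes\operatorname{tr}_A\mathcal N(X)$. For a state $\rho_{XY}$, $S^\downarrow_\infty(X|Y)_\rho:=-D_\infty(\rho_{XY}\|\mathbb 1_X\otimes\rho_Y)$. *)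

theory Defs
  imports "Jordan_Normal_Form.Matrix" "HOL-Library.Extended_Real"
begin

text \<open>Operators on a system of dimension n are n x n complex matrices.
  Composite systems: index of (i,j) in X (x) Y (dim Y = m) is i*m+j.\<close>

definition psd :: "nat \<Rightarrow> complex mat \<Rightarrow> bool" where
  "psd n M \<longleftrightarrow> M \<in> carrier_mat n n \<and>
     (\<forall>v \<in> carrier_vec n.
        let z = (\<Sum>i<n. \<Sum>j<n. cnj (v $ i) * M $$ (i,j) * v $ j)
        in Im z = 0 \<and> Re z \<ge> 0)"

definition loewner_le :: "nat \<Rightarrow> complex mat \<Rightarrow> complex mat \<Rightarrow> bool" where
  "loewner_le n A B \<longleftrightarrow> A \<in> carrier_mat n n \<and> B \<in> carrier_mat n n \<and> psd n (B - A)"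

definition mtrace :: "complex mat \<Rightarrow> complex" where
  "mtrace M = (\<Sum>i<dim_row M. M $$ (i,i))"

definition states :: "nat \<Rightarrow> complex mat set" where
  "states n = {\<rho>. psd n \<rho> \<and> mtrace \<rho> = 1}"

definition D_inf :: "nat \<Rightarrow> complex mat \<Rightarrow> complex mat \<Rightarrow> ereal" where
  "D_inf n \<rho> \<sigma> = (let S = {t::real. loewner_le n \<rho> (complex_of_real t \<cdot>\<^sub>m \<sigma>)} in
      if S = {} then \<infinity> else ereal (log 2 (Inf S)))"

definition block :: "nat \<Rightarrow> complex mat \<Rightarrow> nat \<Rightarrow> nat \<Rightarrow> complex mat" where
  "block n \<rho> k l = mat n n (\<lambda>(a,b). \<rho> $$ (k*n+a, l*n+b))"

text \<open>(id_R (x) M)(rho) = sum_{k,l} |k><l| (x) M(block_kl rho), R of dimension r,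
  M mapping operators of dimension nin to operators of dimension nout.\<close>
definition id_tensor :: "nat \<Rightarrow> nat \<Rightarrow> nat \<Rightarrow> (complex mat \<Rightarrow> complex mat) \<Rightarrow> complex mat \<Rightarrow> complex mat" where
  "id_tensor r nin nout M \<rho> = mat (r*nout) (r*nout)
     (\<lambda>(i,j). M (block nin \<rho> (i div nout) (j div nout)) $$ (i mod nout, j mod nout))"

definition is_linear_map :: "nat \<Rightarrow> (complex mat \<Rightarrow> complex mat) \<Rightarrow> bool" where
  "is_linear_map nin M \<longleftrightarrow>
     (\<forall>X \<in> carrier_mat nin nin. \<forall>Y \<in> carrier_mat nin nin. M (X + Y) = M X + M Y) \<and>
     (\<forall>X \<in> carrier_mat nin nin. \<forall>c. M (c \<cdot>\<^sub>m X) = c \<cdot>\<^sub>m M X)"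

definition is_CP_map :: "nat \<Rightarrow> nat \<Rightarrow> (complex mat \<Rightarrow> complex mat) \<Rightarrow> bool" where
  "is_CP_map nin nout M \<longleftrightarrow>
     (\<forall>X \<in> carrier_mat nin nin. M X \<in> carrier_mat nout nout) \<and> is_linear_map nin M \<and>
     (\<forall>r>0. \<forall>\<rho>. psd (r*nin) \<rho> \<longrightarrow> psd (r*nout) (id_tensor r nin nout M \<rho>))"

definition is_channel :: "nat \<Rightarrow> nat \<Rightarrow> (complex mat \<Rightarrow> complex mat) \<Rightarrow> bool" where
  "is_channel nin nout M \<longleftrightarrow> is_CP_map nin nout M \<and>
     (\<forall>X \<in> carrier_mat nin nin. mtrace (M X) = mtrace X)"

definition D_inf_chan :: "nat \<Rightarrow> nat \<Rightarrow> (complex mat \<Rightarrow> complex mat) \<Rightarrow> (complex mat \<Rightarrow> complex mat) \<Rightarrow> ereal" where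
  "D_inf_chan nin nout M M' =
     (SUP (r,\<rho>) \<in> {(r,\<rho>). r > 0 \<and> \<rho> \<in> states (r*nin)}.
        D_inf (r*nout) (id_tensor r nin nout M \<rho>) (id_tensor r nin nout M' \<rho>))"

text \<open>For an operator M on R (x) A (x) B (dims r, a, b; index x*(a*b)+i*b+j),
  replace_A r a b M = 1_A (x) tr_A M, written in the ordering R A B.\<close>
definition replace_A :: "nat \<Rightarrow> nat \<Rightarrow> nat \<Rightarrow> complex mat \<Rightarrow> complex mat" where
  "replace_A r a b M = mat (r*(a*b)) (r*(a*b)) (\<lambda>(u,v).
     let x1 = u div (a*b); i1 = (u mod (a*b)) div b; j1 = u mod b;
         x2 = v div (a*b); i2 = (v mod (a*b)) div b; j2 = v mod b
     in if i1 = i2 then (\<Sum>k<a. M $$ (x1*(a*b)+k*b+j1, x2*(a*b)+k*b+j2)) else 0)"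

definition replacer_comp :: "nat \<Rightarrow> nat \<Rightarrow> (complex mat \<Rightarrow> complex mat) \<Rightarrow> complex mat \<Rightarrow> complex mat" where
  "replacer_comp a b N X = replace_A 1 a b (N X)"

definition S_NS_inf :: "nat \<Rightarrow> nat \<Rightarrow> nat \<Rightarrow> (complex mat \<Rightarrow> complex mat) \<Rightarrow> ereal" where
  "S_NS_inf nin a b N = - D_inf_chan nin (a*b) N (replacer_comp a b N)"

definition max_ent :: "nat \<Rightarrow> complex mat" where
  "max_ent n = mat (n*n) (n*n) (\<lambda>(u,v).
     if u div n = u mod n \<and> v div n = v mod n then 1 / of_nat n else 0)"

text \<open>Choi state of N in Ch(A'B',AB), dim A' = p, dim B' = q, in ordering (R_A R_B) A B:
  (id (x) N)(Phi_{R_A R_B, A'B'}), and Phi_{R_A A'} (x) Phi_{R_B B'} = Phi_{R_A R_B, A'B'} up to reordering.\<close>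
definition choi_state :: "nat \<Rightarrow> nat \<Rightarrow> nat \<Rightarrow> nat \<Rightarrow> (complex mat \<Rightarrow> complex mat) \<Rightarrow> complex mat" where
  "choi_state p q a b N = id_tensor (p*q) (p*q) (a*b) N (max_ent (p*q))"

definition S_down_inf :: "nat \<Rightarrow> nat \<Rightarrow> nat \<Rightarrow> complex mat \<Rightarrow> ereal" where
  "S_down_inf r a b \<rho> = - D_inf (r*(a*b)) \<rho> (replace_A r a b \<rho>)"

end

theory Submission
  imports Defs
begin

text \<open>Composing with the replacer commutes with \<open>id\<^sub>R \<otimes> \<cdot>\<close>, so the channel divergence is the
  supremum over inputs \<open>\<rho>\<close> of \<open>D\<^sub>\<infinity>(\<omega>\<^sub>\<rho> \<parallel> \<one>\<^sub>A \<otimes> tr\<^sub>A \<omega>\<^sub>\<rho>)\<close> with \<open>\<omega>\<^sub>\<rho> = (id\<^sub>R \<otimes> N)(\<rho>)\<close>, and the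
  Choi state \<open>J\<close> is the instance \<open>\<rho> = \<Phi>\<close>. Conversely, if \<open>J \<le> t (\<one>\<^sub>A \<otimes> tr\<^sub>A J)\<close>, then the
  map \<open>X \<mapsto> t (\<one>\<^sub>A \<otimes> tr\<^sub>A N(X)) - N(X)\<close> has a positive semidefinite Choi matrix, hence is
  completely positive by Choi's theorem, so \<open>\<omega>\<^sub>\<rho> \<le> t (\<one>\<^sub>A \<otimes> tr\<^sub>A \<omega>\<^sub>\<rho>)\<close> for every \<open>\<rho>\<close>.
  Taking traces shows that every feasible \<open>t\<close> is at least \<open>1/|A|\<close>, so all infima are positive
  and the logarithm preserves the comparison.\<close>

section \<open>Positive semidefinite kernels\<close>

definition sesq :: "nat \<Rightarrow> (nat \<Rightarrow> nat \<Rightarrow> complex) \<Rightarrow> (nat \<Rightarrow> complex) \<Rightarrow> (nat \<Rightarrow> complex) \<Rightarrow> complex" where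
  "sesq n Q f g = (\<Sum>i<n. \<Sum>j<n. cnj (f i) * Q i j * g j)"

definition psd_kernel :: "nat \<Rightarrow> (nat \<Rightarrow> nat \<Rightarrow> complex) \<Rightarrow> bool" where
  "psd_kernel n Q \<longleftrightarrow> (\<forall>f. sesq n Q f f \<ge> 0)"

definition unit_fun :: "nat \<Rightarrow> nat \<Rightarrow> complex" where
  "unit_fun c k = of_bool (k = c)"

lemma psd_iff_psd_kernel: "psd n A \<longleftrightarrow> A \<in> carrier_mat n n \<and> psd_kernel n (\<lambda>i j. A $$ (i,j))"
proof -
  have form: "sesq n (\<lambda>i j. A $$ (i,j)) f f =
      (\<Sum>i<n. \<Sum>j<n. cnj (vec n f $ i) * A $$ (i,j) * vec n f $ j)" for f
    unfolding sesq_def by (intro sum.cong refl) auto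
  have "(\<forall>v\<in>carrier_vec n. let z = (\<Sum>i<n. \<Sum>j<n. cnj (v $ i) * A $$ (i,j) * v $ j)
          in Im z = 0 \<and> Re z \<ge> 0) \<longleftrightarrow> (\<forall>f. sesq n (\<lambda>i j. A $$ (i,j)) f f \<ge> 0)"
  proof (intro iffI allI)
    fix f
    assume "\<forall>v\<in>carrier_vec n. let z = (\<Sum>i<n. \<Sum>j<n. cnj (v $ i) * A $$ (i,j) * v $ j)
              in Im z = 0 \<and> Re z \<ge> 0"
    then show "sesq n (\<lambda>i j. A $$ (i,j)) f f \<ge> 0"
      using form[of f] by (auto simp: less_eq_complex_def Let_def dest: bspec[of _ _ "vec n f"])
  next
    assume "\<forall>f. sesq n (\<lambda>i j. A $$ (i,j)) f f \<ge> 0"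
    then show "\<forall>v\<in>carrier_vec n. let z = (\<Sum>i<n. \<Sum>j<n. cnj (v $ i) * A $$ (i,j) * v $ j)
                 in Im z = 0 \<and> Re z \<ge> 0"
      unfolding sesq_def by (auto simp: less_eq_complex_def Let_def)
  qed
  then show ?thesis unfolding psd_def psd_kernel_def by simp
qed

lemma psd_kernel_cong:
  "(\<And>u v. u < n \<Longrightarrow> v < n \<Longrightarrow> Q u v = Q' u v) \<Longrightarrow> psd_kernel n Q \<longleftrightarrow> psd_kernel n Q'"
proof -
  assume "\<And>u v. u < n \<Longrightarrow> v < n \<Longrightarrow> Q u v = Q' u v"
  then have "sesq n Q f f = sesq n Q' f f" for f unfolding sesq_def by (intro sum.cong refl) simp
  then show ?thesis unfolding psd_kernel_def by simp
qed

lemma sesq_add_left: "sesq n Q (\<lambda>i. f i + g i) h = sesq n Q f h + sesq n Q g h"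
  and sesq_add_right: "sesq n Q h (\<lambda>i. f i + g i) = sesq n Q h f + sesq n Q h g"
  and sesq_scale_left: "sesq n Q (\<lambda>i. c * f i) g = cnj c * sesq n Q f g"
  and sesq_scale_right: "sesq n Q f (\<lambda>i. c * g i) = c * sesq n Q f g"
  unfolding sesq_def by (simp_all add: algebra_simps sum.distrib sum_distrib_left)

lemma sesq_unit_right: "c < n \<Longrightarrow> sesq n Q f (unit_fun c) = (\<Sum>i<n. cnj (f i) * Q i c)"
  unfolding sesq_def unit_fun_def by (simp add: if_distrib sum.If_cases)

lemma sesq_unit_left:
  assumes "c < n" shows "sesq n Q (unit_fun c) f = (\<Sum>j<n. Q c j * f j)"
proof -
  have "sesq n Q (unit_fun c) f = (\<Sum>i<n. if i = c then \<Sum>j<n. Q c j * f j else 0)"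
    unfolding sesq_def by (intro sum.cong) (auto simp: unit_fun_def)
  then show ?thesis using assms by simp
qed

lemma sesq_unit_unit: "c < n \<Longrightarrow> d < n \<Longrightarrow> sesq n Q (unit_fun c) (unit_fun d) = Q c d"
  by (simp add: sesq_unit_left unit_fun_def if_distrib sum.If_cases)

lemma psd_kernel_hermitian:
  assumes "psd_kernel n Q" shows "sesq n Q g f = cnj (sesq n Q f g)"
proof -
  have "sesq n Q (\<lambda>i. f i + g i) (\<lambda>i. f i + g i) \<ge> 0"
    and "sesq n Q (\<lambda>i. f i + \<i> * g i) (\<lambda>i. f i + \<i> * g i) \<ge> 0"
    and "sesq n Q f f \<ge> 0" "sesq n Q g g \<ge> 0"
    using assms unfolding psd_kernel_def by blast+
  moreover have "sesq n Q (\<lambda>i. f i + g i) (\<lambda>i. f i + g i) =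
      sesq n Q f f + sesq n Q f g + sesq n Q g f + sesq n Q g g"
    by (simp add: sesq_add_left sesq_add_right)
  moreover have "sesq n Q (\<lambda>i. f i + \<i> * g i) (\<lambda>i. f i + \<i> * g i) =
      sesq n Q f f + \<i> * sesq n Q f g - \<i> * sesq n Q g f + sesq n Q g g"
    by (simp add: sesq_add_left sesq_add_right sesq_scale_left sesq_scale_right algebra_simps)
  ultimately have "Im (sesq n Q f g + sesq n Q g f) = 0" "Re (sesq n Q f g - sesq n Q g f) = 0"
    by (auto simp: less_eq_complex_def)
  then show ?thesis by (simp add: complex_eq_iff)
qed

lemma psd_kernel_hermitian_entry: "psd_kernel n Q \<Longrightarrow> a < n \<Longrightarrow> b < n \<Longrightarrow> Q b a = cnj (Q a b)"
  using psd_kernel_hermitian[of n Q "unit_fun b" "unit_fun a"] by (simp add: sesq_unit_unit)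

lemma psd_kernel_diag_nonneg: "psd_kernel n Q \<Longrightarrow> c < n \<Longrightarrow> Q c c \<ge> 0"
  using sesq_unit_unit[of c n c Q] unfolding psd_kernel_def by metis

lemma sesq_add_unit:
  assumes "psd_kernel n Q" "c < n"
  shows "sesq n Q (\<lambda>i. f i + t * unit_fun c i) (\<lambda>i. f i + t * unit_fun c i) =
     sesq n Q f f + t * sesq n Q f (unit_fun c) + cnj t * cnj (sesq n Q f (unit_fun c)) + cnj t * t * Q c c"
  using assms by (simp add: sesq_add_left sesq_add_right sesq_scale_left sesq_scale_right
      psd_kernel_hermitian[OF assms(1), of "unit_fun c" f] sesq_unit_unit algebra_simps)

text \<open>Perturbing \<open>unit_fun a\<close> by a suitable multiple of \<open>unit_fun c\<close> makes the form negative
  unless \<open>Q a c = 0\<close>.\<close>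
lemma psd_kernel_zero_diag:
  assumes Q: "psd_kernel n Q" and c: "c < n" and a: "a < n" and zero: "Q c c = 0"
  shows "Q a c = 0"
proof (rule ccontr)
  define z where "z = Q a c"
  assume "Q a c \<noteq> 0"
  define w where "w = (Re z)\<^sup>2 + (Im z)\<^sup>2"
  have "w > 0"
    unfolding w_def z_def by (metis \<open>Q a c \<noteq> 0\<close> complex_eq_0 not_less_iff_gr_or_eq sum_power2_gt_zero_iff)
  define s where "s = (Re (Q a a) + 1) / (2 * w)"
  have s: "2 * s * w = Re (Q a a) + 1" unfolding s_def using \<open>w > 0\<close> by simp
  define t where "t = - complex_of_real s * cnj z"
  have "sesq n Q (\<lambda>i. unit_fun a i + t * unit_fun c i) (\<lambda>i. unit_fun a i + t * unit_fun c i) \<ge> 0"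
    using Q unfolding psd_kernel_def by blast
  then have "Re (Q a a + t * z + cnj t * cnj z) \<ge> 0"
    using sesq_add_unit[OF Q c] zero a c by (simp add: z_def sesq_unit_unit less_eq_complex_def)
  moreover have "Re (Q a a + t * z + cnj t * cnj z) = Re (Q a a) - 2 * s * w"
    unfolding t_def w_def by (simp add: algebra_simps power2_eq_square)
  ultimately show False using s by simp
qed

lemma psd_kernel_schur_complement:
  assumes Q: "psd_kernel n Q" and c: "c < n" and nonzero: "Q c c \<noteq> 0"
  shows "psd_kernel n (\<lambda>a b. Q a b - Q a c * cnj (Q b c) / Q c c)"
  unfolding psd_kernel_def
proof
  fix f
  define z where "z = sesq n Q f (unit_fun c)"
  have real: "cnj (Q c c) = Q c c" using psd_kernel_diag_nonneg[OF Q c]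
    by (simp add: less_eq_complex_def complex_eq_iff)
  define t where "t = - cnj z / Q c c"
  have "sesq n Q (\<lambda>i. f i + t * unit_fun c i) (\<lambda>i. f i + t * unit_fun c i) \<ge> 0"
    using Q unfolding psd_kernel_def by blast
  moreover have "sesq n Q (\<lambda>i. f i + t * unit_fun c i) (\<lambda>i. f i + t * unit_fun c i) =
      sesq n Q f f - z * cnj z / Q c c"
    unfolding sesq_add_unit[OF Q c] z_def[symmetric] t_def using nonzero real
    by (simp add: field_simps)
  moreover have "sesq n (\<lambda>a b. Q a b - Q a c * cnj (Q b c) / Q c c) f f = sesq n Q f f - z * cnj z / Q c c"
  proof -
    have z: "z = (\<Sum>i<n. cnj (f i) * Q i c)" unfolding z_def using sesq_unit_right[OF c] by simp
    then have cnj_z: "cnj z = (\<Sum>j<n. cnj (Q j c) * f j)" by (simp add: cnj_sum mult.commute)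
    have "sesq n (\<lambda>a b. Q a b - Q a c * cnj (Q b c) / Q c c) f f = sesq n Q f f -
        (\<Sum>i<n. \<Sum>j<n. (cnj (f i) * Q i c) * (cnj (Q j c) * f j)) / Q c c"
      unfolding sesq_def by (simp add: algebra_simps sum_subtractf sum_divide_distrib)
    also have "(\<Sum>i<n. \<Sum>j<n. (cnj (f i) * Q i c) * (cnj (Q j c) * f j)) = z * cnj z"
      unfolding cnj_z by (subst z, rule sum_product[symmetric])
    finally show ?thesis .
  qed
  ultimately show "sesq n (\<lambda>a b. Q a b - Q a c * cnj (Q b c) / Q c c) f f \<ge> 0" by simp
qed

lemma psd_kernel_split_rank_one:
  assumes Q: "psd_kernel n Q" and c: "c < n"
  obtains u where "psd_kernel n (\<lambda>a b. Q a b - u a * cnj (u b))"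
    and "\<And>a. a < n \<Longrightarrow> u a * cnj (u c) = Q a c"
    and "\<And>a. Q a c = 0 \<Longrightarrow> u a = 0"
proof (cases "Q c c = 0")
  case True
  show ?thesis by (rule that[of "\<lambda>_. 0"]) (use Q psd_kernel_zero_diag[OF Q c _ True] in simp_all)
next
  case False
  define r where "r = Re (Q c c)"
  have real: "cnj (Q c c) = Q c c" using psd_kernel_diag_nonneg[OF Q c]
    by (simp add: less_eq_complex_def complex_eq_iff)
  then have Qcc: "Q c c = complex_of_real r" unfolding r_def by (simp add: complex_eq_iff)
  have "r > 0" using psd_kernel_diag_nonneg[OF Q c] False Qcc by (simp add: less_eq_complex_def)
  define u where "u a = Q a c / complex_of_real (sqrt r)" for a
  have uu: "u a * cnj (u b) = Q a c * cnj (Q b c) / Q c c" for a b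
  proof -
    have "complex_of_real (sqrt r) * complex_of_real (sqrt r) = complex_of_real r"
      using \<open>r > 0\<close> by (simp flip: of_real_mult)
    then show ?thesis unfolding u_def Qcc by simp
  qed
  show ?thesis
  proof (rule that[of u])
    show "psd_kernel n (\<lambda>a b. Q a b - u a * cnj (u b))"
      unfolding uu by (rule psd_kernel_schur_complement[OF Q c False])
    show "u a * cnj (u c) = Q a c" if "a < n" for a
      unfolding uu using False real by simp
  qed (simp add: u_def)
qed

lemma psd_kernel_gram_supported:
  assumes "psd_kernel n Q" "k \<le> n" "\<And>a b. a < n \<Longrightarrow> b < n \<Longrightarrow> a < n - k \<or> b < n - k \<Longrightarrow> Q a b = 0"
  shows "\<exists>L. \<forall>a<n. \<forall>b<n. Q a b = (\<Sum>s<k. L s a * cnj (L s b))"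
  using assms
proof (induction k arbitrary: Q)
  case 0
  then show ?case by auto
next
  case (Suc k)
  define c where "c = n - Suc k"
  have c: "c < n" using Suc.prems(2) unfolding c_def by simp
  obtain u where psd: "psd_kernel n (\<lambda>a b. Q a b - u a * cnj (u b))"
    and col: "\<And>a. a < n \<Longrightarrow> u a * cnj (u c) = Q a c" and zero: "\<And>a. Q a c = 0 \<Longrightarrow> u a = 0"
    using psd_kernel_split_rank_one[OF Suc.prems(1) c] by blast
  have "Q a b - u a * cnj (u b) = 0" if ab: "a < n" "b < n" "a < n - k \<or> b < n - k" for a b
  proof -
    from ab consider "a < c" | "b < c" | "a = c" | "b = c" unfolding c_def by linarith
    then show ?thesis
    proof cases
      case 1
      then show ?thesis using Suc.prems(3)[of a b] Suc.prems(3)[of a c] zero[of a] ab c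
        by (simp add: c_def)
    next
      case 2
      then show ?thesis using Suc.prems(3)[of a b] Suc.prems(3)[of b c] zero[of b] ab c
        by (simp add: c_def)
    next
      case 3
      then show ?thesis
        using psd_kernel_hermitian_entry[OF psd ab(2) c] col[OF ab(2)] by simp
    qed (use col ab in simp)
  qed
  then obtain L where L: "\<forall>a<n. \<forall>b<n. Q a b - u a * cnj (u b) = (\<Sum>s<k. L s a * cnj (L s b))"
    using Suc.IH[OF psd] Suc.prems(2) by auto
  show ?case
    by (rule exI[of _ "L(k := u)"]) (use L in \<open>simp add: algebra_simps\<close>)
qed

lemma psd_kernel_gram:
  "psd_kernel n Q \<Longrightarrow> \<exists>L. \<forall>a<n. \<forall>b<n. Q a b = (\<Sum>s<n. L s a * cnj (L s b))"
  using psd_kernel_gram_supported[of n Q n] by simp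

lemma psd_kernel_rank_one: "c \<ge> 0 \<Longrightarrow> psd_kernel n (\<lambda>i j. complex_of_real c * (cnj (h i) * h j))"
  unfolding psd_kernel_def
proof
  fix f assume "c \<ge> 0"
  define w where "w = (\<Sum>j<n. h j * f j)"
  have "sesq n (\<lambda>i j. complex_of_real c * (cnj (h i) * h j)) f f = complex_of_real c * (cnj w * w)"
    unfolding sesq_def w_def by (simp add: cnj_sum sum_distrib_left sum_distrib_right mult_ac)
  also have "\<dots> = complex_of_real (c * ((Re w)\<^sup>2 + (Im w)\<^sup>2))"
    using complex_mult_cnj[of w] by (simp add: mult.commute)
  finally show "sesq n (\<lambda>i j. complex_of_real c * (cnj (h i) * h j)) f f \<ge> 0"
    using \<open>c \<ge> 0\<close> by (simp add: less_eq_complex_def)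
qed

lemma psd_kernel_scale_pos:
  assumes "c > 0" and "psd_kernel n (\<lambda>u v. complex_of_real c * Q u v)"
  shows "psd_kernel n Q"
  unfolding psd_kernel_def
proof
  fix f
  have "sesq n (\<lambda>u v. complex_of_real c * Q u v) f f = complex_of_real c * sesq n Q f f"
    unfolding sesq_def by (simp add: sum_distrib_left mult_ac)
  then have "complex_of_real c * sesq n Q f f \<ge> 0"
    using assms(2) unfolding psd_kernel_def by metis
  then show "sesq n Q f f \<ge> 0"
    using assms(1) by (simp add: less_eq_complex_def zero_less_mult_iff zero_le_mult_iff)
qed

section \<open>Choi's theorem\<close>

lemma mult_add_less_mult: "k < n \<Longrightarrow> i < m \<Longrightarrow> k * m + i < n * (m::nat)"
  by (metis add.commute add_less_cancel_left less_le_trans mult_Suc mult_le_mono1 Suc_leI)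

lemma sum_lessThan_mult: "(\<Sum>u<r*m. h u) = (\<Sum>x<r. \<Sum>i<(m::nat). h (x*m+i))"
  unfolding sum.nat_group[symmetric]
  by (simp add: sum.atLeastLessThan_shift_0 atLeast0LessThan comp_def add.commute)

lemma sum_reorder7:
  "(\<Sum>x\<in>X. \<Sum>i\<in>I. \<Sum>y\<in>Y. \<Sum>j\<in>J. \<Sum>k\<in>K. \<Sum>l\<in>L. \<Sum>s\<in>S. F x i y j k l s) =
   (\<Sum>s\<in>S. \<Sum>x\<in>X. \<Sum>k\<in>K. \<Sum>y\<in>Y. \<Sum>l\<in>L. \<Sum>i\<in>I. \<Sum>j\<in>J. (F x i y j k l s :: 'a::comm_monoid_add))"
  by (simp only: sum.swap[of _ I Y] sum.swap[of _ I K] sum.swap[of _ I L] sum.swap[of _ I S]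
      sum.swap[of _ J K] sum.swap[of _ J L] sum.swap[of _ J S] sum.swap[of _ Y K] sum.swap[of _ Y S]
      sum.swap[of _ L S] sum.swap[of _ K S] sum.swap[of _ X S])

text \<open>A Gram decomposition
  of \<open>H\<close> writes the resulting form as a sum of forms of \<open>P\<close>.\<close>
lemma psd_kernel_choi_contraction:
  fixes H :: "nat \<Rightarrow> nat \<Rightarrow> nat \<Rightarrow> nat \<Rightarrow> complex"
  assumes H: "psd_kernel (n*m) (\<lambda>u v. H (u div m) (v div m) (u mod m) (v mod m))"
    and P: "psd_kernel (r*n) P"
  shows "psd_kernel (r*m)
    (\<lambda>u v. \<Sum>k<n. \<Sum>l<n. P (u div m * n + k) (v div m * n + l) * H k l (u mod m) (v mod m))"
  unfolding psd_kernel_def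
proof
  fix f
  obtain L where L: "\<forall>a<n*m. \<forall>b<n*m.
      H (a div m) (b div m) (a mod m) (b mod m) = (\<Sum>s<n*m. L s a * cnj (L s b))"
    using psd_kernel_gram[OF H] by blast
  have HL: "H k l i j = (\<Sum>s<n*m. L s (k*m+i) * cnj (L s (l*m+j)))"
    if "k < n" "l < n" "i < m" "j < m" for k l i j
    using L[rule_format, OF mult_add_less_mult[OF that(1,3)] mult_add_less_mult[OF that(2,4)]] that
    by simp
  define T where "T x i y j k l s = cnj (f (x*m+i)) * P (x*n+k) (y*n+l) * L s (k*m+i) *
      cnj (L s (l*m+j)) * f (y*m+j)" for x i y j k l s
  define g where "g s u = (\<Sum>j<m. cnj (L s ((u mod n)*m + j)) * f ((u div n)*m + j))" for s u
  have "sesq (r*m)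
      (\<lambda>u v. \<Sum>k<n. \<Sum>l<n. P (u div m * n + k) (v div m * n + l) * H k l (u mod m) (v mod m)) f f
    = (\<Sum>x<r. \<Sum>i<m. \<Sum>y<r. \<Sum>j<m. \<Sum>k<n. \<Sum>l<n. \<Sum>s<n*m. T x i y j k l s)"
    unfolding sesq_def sum_lessThan_mult[where r = r and m = m] T_def
    by (simp add: HL sum_distrib_left sum_distrib_right mult_ac)
  also have "\<dots> = (\<Sum>s<n*m. \<Sum>x<r. \<Sum>k<n. \<Sum>y<r. \<Sum>l<n. \<Sum>i<m. \<Sum>j<m. T x i y j k l s)"
    by (rule sum_reorder7)
  also have "\<dots> = (\<Sum>s<n*m. sesq (r*n) P (g s) (g s))"
    unfolding sesq_def sum_lessThan_mult[where r = r and m = n] T_def g_def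
    by (simp add: cnj_sum sum_distrib_left sum_distrib_right mult_ac)
  finally show "sesq (r*m)
      (\<lambda>u v. \<Sum>k<n. \<Sum>l<n. P (u div m * n + k) (v div m * n + l) * H k l (u mod m) (v mod m)) f f \<ge> 0"
    using P unfolding psd_kernel_def by (simp add: sum_nonneg)
qed

definition matrix_unit :: "nat \<Rightarrow> nat \<Rightarrow> nat \<Rightarrow> complex mat" where
  "matrix_unit n k l = mat n n (\<lambda>(x,y). of_bool (x = k \<and> y = l))"

definition mat_restrict :: "nat \<Rightarrow> complex mat \<Rightarrow> (nat \<times> nat) set \<Rightarrow> complex mat" where
  "mat_restrict n X K = mat n n (\<lambda>(x,y). if (x,y) \<in> K then X $$ (x,y) else 0)"

lemma linear_map_mat_restrict_entry:
  assumes lin: "is_linear_map n M" and car: "\<forall>X\<in>carrier_mat n n. M X \<in> carrier_mat m m"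
    and ij: "i < m" "j < m" and K: "finite K"
  shows "M (mat_restrict n X K) $$ (i,j) = (\<Sum>(k,l)\<in>K. X $$ (k,l) * M (matrix_unit n k l) $$ (i,j))"
  using K
proof (induction K rule: finite_induct)
  case empty
  have E: "matrix_unit n 0 0 \<in> carrier_mat n n" unfolding matrix_unit_def by simp
  have "mat_restrict n X {} = 0 \<cdot>\<^sub>m matrix_unit n 0 0"
    unfolding mat_restrict_def matrix_unit_def by (rule eq_matI) auto
  then have "M (mat_restrict n X {}) = 0 \<cdot>\<^sub>m M (matrix_unit n 0 0)"
    using lin E unfolding is_linear_map_def by simp
  then show ?case using car E ij by auto
next
  case (insert kl K)
  obtain k l where kl: "kl = (k,l)" by (cases kl)
  have E: "matrix_unit n k l \<in> carrier_mat n n" and S: "mat_restrict n X K \<in> carrier_mat n n"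
    unfolding matrix_unit_def mat_restrict_def by simp_all
  have "mat_restrict n X (insert kl K) = mat_restrict n X K + X $$ (k,l) \<cdot>\<^sub>m matrix_unit n k l"
    unfolding mat_restrict_def matrix_unit_def kl using insert(2) kl by (intro eq_matI) auto
  then have "M (mat_restrict n X (insert kl K)) = M (mat_restrict n X K) + X $$ (k,l) \<cdot>\<^sub>m M (matrix_unit n k l)"
    using lin E S unfolding is_linear_map_def by (simp add: smult_carrier_mat)
  then show ?case using insert car E S ij kl by auto
qed

lemma linear_map_entry:
  assumes lin: "is_linear_map n M" and car: "\<forall>X\<in>carrier_mat n n. M X \<in> carrier_mat m m"
    and ij: "i < m" "j < m" and X: "X \<in> carrier_mat n n"
  shows "M X $$ (i,j) = (\<Sum>k<n. \<Sum>l<n. X $$ (k,l) * M (matrix_unit n k l) $$ (i,j))"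
proof -
  have "mat_restrict n X ({..<n} \<times> {..<n}) = X" unfolding mat_restrict_def using X by (intro eq_matI) auto
  then show ?thesis using linear_map_mat_restrict_entry[OF lin car ij, of "{..<n} \<times> {..<n}" X]
    by (simp add: sum.cartesian_product)
qed

lemma id_tensor_entry:
  assumes lin: "is_linear_map n M" and car: "\<forall>X\<in>carrier_mat n n. M X \<in> carrier_mat m m"
    and uv: "u < r*m" "v < r*m"
  shows "id_tensor r n m M \<rho> $$ (u,v) = (\<Sum>k<n. \<Sum>l<n.
    \<rho> $$ (u div m * n + k, v div m * n + l) * M (matrix_unit n k l) $$ (u mod m, v mod m))"
proof -
  have "m > 0" using uv by (cases m) auto
  then have "M (block n \<rho> (u div m) (v div m)) $$ (u mod m, v mod m) = (\<Sum>k<n. \<Sum>l<n.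
      block n \<rho> (u div m) (v div m) $$ (k,l) * M (matrix_unit n k l) $$ (u mod m, v mod m))"
    by (intro linear_map_entry[OF lin car]) (auto simp: block_def)
  then show ?thesis unfolding id_tensor_def block_def using uv by simp
qed

lemma dim_id_tensor [simp]:
  "dim_row (id_tensor r n m M \<rho>) = r*m" "dim_col (id_tensor r n m M \<rho>) = r*m"
  by (simp_all add: id_tensor_def)

lemma id_tensor_carrier: "id_tensor r n m M \<rho> \<in> carrier_mat (r*m) (r*m)"
  by (simp add: carrier_matI)

lemma max_ent_entry:
  assumes "x < n" "k < n" "y < n" "l < n"
  shows "max_ent n $$ (x*n+k, y*n+l) = (if x = k \<and> y = l then 1 / of_nat n else 0)"
  using assms mult_add_less_mult[OF assms(1,2)] mult_add_less_mult[OF assms(3,4)]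
  unfolding max_ent_def by simp

lemma max_ent_contraction:
  assumes "x < n" "y < n"
  shows "(\<Sum>k<n. \<Sum>l<n. max_ent n $$ (x*n+k, y*n+l) * H k l) = H x y / of_nat n"
proof -
  have "(\<Sum>l<n. max_ent n $$ (x*n+k, y*n+l) * H k l) = (if k = x then H x y / of_nat n else 0)"
    if "k < n" for k
  proof -
    have "(\<Sum>l<n. max_ent n $$ (x*n+k, y*n+l) * H k l) =
        (\<Sum>l<n. if l = y then (if k = x then H x y / of_nat n else 0) else 0)"
      using assms that by (intro sum.cong refl) (simp add: max_ent_entry)
    then show ?thesis using assms by simp
  qed
  then show ?thesis using assms by simp
qed

lemma max_ent_state:
  assumes "n > 0" shows "max_ent n \<in> states (n*n)"
proof -
  define g :: "nat \<Rightarrow> complex" where "g i = of_bool (i div n = i mod n)" for i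
  have entry: "complex_of_real (1 / real n) * (cnj (g i) * g j) = max_ent n $$ (i,j)"
    if "i < n*n" "j < n*n" for i j
    using that by (simp add: max_ent_def g_def)
  have "psd_kernel (n*n) (\<lambda>i j. complex_of_real (1 / real n) * (cnj (g i) * g j))"
    by (rule psd_kernel_rank_one) simp
  then have "psd_kernel (n*n) (\<lambda>i j. max_ent n $$ (i,j))"
    by (simp only: psd_kernel_cong[OF entry])
  then have "psd (n*n) (max_ent n)"
    unfolding psd_iff_psd_kernel by (simp add: max_ent_def)
  moreover have "mtrace (max_ent n) = (\<Sum>u<n*n. max_ent n $$ (u,u))"
    unfolding mtrace_def by (simp add: max_ent_def)
  moreover have "\<dots> = (\<Sum>x<n. \<Sum>k<n. max_ent n $$ (x*n+k, x*n+k))"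
    by (rule sum_lessThan_mult)
  moreover have "\<dots> = 1"
    using assms by (simp add: max_ent_entry)
  ultimately show ?thesis unfolding states_def by simp
qed

lemma psd_id_tensor_if_psd_choi:
  assumes lin: "is_linear_map n M" and car: "\<forall>X\<in>carrier_mat n n. M X \<in> carrier_mat m m"
    and "n > 0" and choi: "psd (n*m) (id_tensor n n m M (max_ent n))" and \<rho>: "psd (r*n) \<rho>"
  shows "psd (r*m) (id_tensor r n m M \<rho>)"
proof -
  let ?H = "\<lambda>k l i j. M (matrix_unit n k l) $$ (i,j)"
  have choi_entry: "id_tensor n n m M (max_ent n) $$ (u,v) =
      complex_of_real (1 / real n) * ?H (u div m) (v div m) (u mod m) (v mod m)"
    if "u < n*m" "v < n*m" for u v
    using that less_mult_imp_div_less[OF that(1)] less_mult_imp_div_less[OF that(2)]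
    by (simp add: id_tensor_entry[OF lin car] max_ent_contraction)
  have "psd_kernel (n*m) (\<lambda>u v. id_tensor n n m M (max_ent n) $$ (u,v))"
    using choi psd_iff_psd_kernel by blast
  then have "psd_kernel (n*m)
      (\<lambda>u v. complex_of_real (1 / real n) * ?H (u div m) (v div m) (u mod m) (v mod m))"
    by (simp only: psd_kernel_cong[OF choi_entry])
  then have H: "psd_kernel (n*m) (\<lambda>u v. ?H (u div m) (v div m) (u mod m) (v mod m))"
    by (rule psd_kernel_scale_pos[rotated]) (use \<open>n > 0\<close> in simp)
  have "psd_kernel (r*n) (\<lambda>i j. \<rho> $$ (i,j))" using \<rho> psd_iff_psd_kernel by blast
  from psd_kernel_choi_contraction[OF H this]
  have "psd_kernel (r*m) (\<lambda>u v. id_tensor r n m M \<rho> $$ (u,v))"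
    by (simp only: psd_kernel_cong[OF id_tensor_entry[OF lin car]])
  then show ?thesis unfolding psd_iff_psd_kernel using id_tensor_carrier by blast
qed

section \<open>The replacer \<open>\<one>\<^sub>A \<otimes> tr\<^sub>A\<close>\<close>

lemma dim_replace_A [simp]:
  "dim_row (replace_A r a b M) = r*(a*b)" "dim_col (replace_A r a b M) = r*(a*b)"
  by (simp_all add: replace_A_def)

lemma replace_A_carrier: "replace_A r a b M \<in> carrier_mat (r*(a*b)) (r*(a*b))"
  by (simp add: carrier_matI)

lemma replace_A_entry:
  assumes "u < r*(a*b)" "v < r*(a*b)"
  shows "replace_A r a b M $$ (u,v) = (if (u mod (a*b)) div b = (v mod (a*b)) div b then
     (\<Sum>t<a. M $$ (u div (a*b) * (a*b) + (t*b + u mod b), v div (a*b) * (a*b) + (t*b + v mod b)))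
     else 0)"
  unfolding replace_A_def using assms by (simp add: Let_def add.assoc)

lemma replace_A_index_less:
  fixes u r a b t :: nat
  assumes "u < r*(a*b)" "t < a"
  shows "u div (a*b) * (a*b) + (t*b + u mod b) < r*(a*b)"
proof -
  have "b > 0" using assms by (cases b) auto
  then have "t*b + u mod b < a*b" using mult_add_less_mult[OF assms(2)] by simp
  moreover have "u div (a*b) < r" using assms(1) by (simp add: less_mult_imp_div_less)
  ultimately show ?thesis using mult_add_less_mult by blast
qed

lemma replace_A_add:
  assumes "A \<in> carrier_mat (r*(a*b)) (r*(a*b))" "B \<in> carrier_mat (r*(a*b)) (r*(a*b))"
  shows "replace_A r a b (A + B) = replace_A r a b A + replace_A r a b B"
  by (rule eq_matI) (use assms in \<open>auto simp: replace_A_entry replace_A_index_less sum.distrib\<close>)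

lemma replace_A_smult:
  assumes "A \<in> carrier_mat (r*(a*b)) (r*(a*b))"
  shows "replace_A r a b (c \<cdot>\<^sub>m A) = c \<cdot>\<^sub>m replace_A r a b A"
  by (rule eq_matI) (use assms in \<open>auto simp: replace_A_entry replace_A_index_less sum_distrib_left\<close>)

lemma is_linear_map_replacer_comp:
  assumes "is_linear_map n N" and "\<forall>X\<in>carrier_mat n n. N X \<in> carrier_mat (a*b) (a*b)"
  shows "is_linear_map n (replacer_comp a b N)"
  using assms unfolding is_linear_map_def replacer_comp_def by (simp add: replace_A_add replace_A_smult)

lemma is_linear_map_smult_diff:
  assumes lin: "is_linear_map n M1" "is_linear_map n M2"
    and car: "\<forall>X\<in>carrier_mat n n. M1 X \<in> carrier_mat m m" "\<forall>X\<in>carrier_mat n n. M2 X \<in> carrier_mat m m"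
  shows "is_linear_map n (\<lambda>X. c \<cdot>\<^sub>m M1 X - M2 X)"
  unfolding is_linear_map_def
proof (intro conjI ballI allI)
  fix X Y :: "complex mat" assume X: "X \<in> carrier_mat n n" and Y: "Y \<in> carrier_mat n n"
  then have "M1 (X + Y) = M1 X + M1 Y" "M2 (X + Y) = M2 X + M2 Y"
    using lin unfolding is_linear_map_def by blast+
  moreover have "M1 X \<in> carrier_mat m m" "M1 Y \<in> carrier_mat m m"
    "M2 X \<in> carrier_mat m m" "M2 Y \<in> carrier_mat m m"
    using car X Y by blast+
  ultimately show "c \<cdot>\<^sub>m M1 (X + Y) - M2 (X + Y) = c \<cdot>\<^sub>m M1 X - M2 X + (c \<cdot>\<^sub>m M1 Y - M2 Y)"
    by (intro eq_matI) (auto simp: algebra_simps)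
next
  fix X :: "complex mat" and d assume X: "X \<in> carrier_mat n n"
  then have "M1 (d \<cdot>\<^sub>m X) = d \<cdot>\<^sub>m M1 X" "M2 (d \<cdot>\<^sub>m X) = d \<cdot>\<^sub>m M2 X"
    using lin unfolding is_linear_map_def by blast+
  moreover have "M1 X \<in> carrier_mat m m" "M2 X \<in> carrier_mat m m"
    using car X by blast+
  ultimately show "c \<cdot>\<^sub>m M1 (d \<cdot>\<^sub>m X) - M2 (d \<cdot>\<^sub>m X) = d \<cdot>\<^sub>m (c \<cdot>\<^sub>m M1 X - M2 X)"
    by (intro eq_matI) (auto simp: algebra_simps)
qed

lemma id_tensor_smult_diff:
  assumes "\<forall>X\<in>carrier_mat n n. M1 X \<in> carrier_mat m m" "\<forall>X\<in>carrier_mat n n. M2 X \<in> carrier_mat m m"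
  shows "id_tensor r n m (\<lambda>X. c \<cdot>\<^sub>m M1 X - M2 X) \<rho> = c \<cdot>\<^sub>m id_tensor r n m M1 \<rho> - id_tensor r n m M2 \<rho>"
proof (rule eq_matI)
  fix u v assume "u < dim_row (c \<cdot>\<^sub>m id_tensor r n m M1 \<rho> - id_tensor r n m M2 \<rho>)"
    "v < dim_col (c \<cdot>\<^sub>m id_tensor r n m M1 \<rho> - id_tensor r n m M2 \<rho>)"
  then have uv: "u < r*m" "v < r*m" by simp_all
  then have "m > 0" by (cases m) auto
  define B where "B = block n \<rho> (u div m) (v div m)"
  have "B \<in> carrier_mat n n" by (simp add: B_def block_def)
  then have "M1 B \<in> carrier_mat m m" "M2 B \<in> carrier_mat m m" using assms by blast+
  then show "id_tensor r n m (\<lambda>X. c \<cdot>\<^sub>m M1 X - M2 X) \<rho> $$ (u,v) =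
      (c \<cdot>\<^sub>m id_tensor r n m M1 \<rho> - id_tensor r n m M2 \<rho>) $$ (u,v)"
    using uv \<open>m > 0\<close> by (simp add: id_tensor_def B_def[symmetric])
qed simp_all

lemma id_tensor_replacer_comp:
  assumes car: "\<forall>X\<in>carrier_mat n n. N X \<in> carrier_mat (a*b) (a*b)"
  shows "id_tensor r n (a*b) (replacer_comp a b N) \<rho> = replace_A r a b (id_tensor r n (a*b) N \<rho>)"
proof (rule eq_matI)
  fix u v assume "u < dim_row (replace_A r a b (id_tensor r n (a*b) N \<rho>))"
    "v < dim_col (replace_A r a b (id_tensor r n (a*b) N \<rho>))"
  then have uv: "u < r*(a*b)" "v < r*(a*b)" by simp_all
  then have "a*b > 0" by (cases "a*b") auto
  then have um: "u mod (a*b) < 1*(a*b)" "v mod (a*b) < 1*(a*b)" by simp_all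
  define B where "B = block n \<rho> (u div (a*b)) (v div (a*b))"
  have entry: "id_tensor r n (a*b) N \<rho> $$
        (u div (a*b) * (a*b) + (t*b + u mod b), v div (a*b) * (a*b) + (t*b + v mod b)) =
      N B $$ (t*b + u mod b, t*b + v mod b)" if "t < a" for t
  proof -
    have "t*b + u mod b < a*b" "t*b + v mod b < a*b"
      using mult_add_less_mult[OF that] \<open>a*b > 0\<close> by simp_all
    then have "(u div (a*b) * (a*b) + (t*b + u mod b)) div (a*b) = u div (a*b)"
      "(v div (a*b) * (a*b) + (t*b + v mod b)) div (a*b) = v div (a*b)"
      "(u div (a*b) * (a*b) + (t*b + u mod b)) mod (a*b) = t*b + u mod b"
      "(v div (a*b) * (a*b) + (t*b + v mod b)) mod (a*b) = t*b + v mod b"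
      by (simp_all only: div_mult_self3 mod_mult_self3 div_less mod_less)
    then show ?thesis
      using replace_A_index_less[OF uv(1) that] replace_A_index_less[OF uv(2) that]
      by (simp add: id_tensor_def B_def)
  qed
  have "id_tensor r n (a*b) (replacer_comp a b N) \<rho> $$ (u,v) = replace_A 1 a b (N B) $$ (u mod (a*b), v mod (a*b))"
    unfolding id_tensor_def replacer_comp_def B_def using uv by simp
  also have "\<dots> = replace_A r a b (id_tensor r n (a*b) N \<rho>) $$ (u,v)"
    unfolding replace_A_entry[OF um] replace_A_entry[OF uv] using \<open>a*b > 0\<close>
    by (simp add: entry mod_mod_cancel)
  finally show "id_tensor r n (a*b) (replacer_comp a b N) \<rho> $$ (u,v) =
      replace_A r a b (id_tensor r n (a*b) N \<rho>) $$ (u,v)" .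
qed simp_all

section \<open>Traces and the channel divergence\<close>

lemma mtrace_smult: "A \<in> carrier_mat n n \<Longrightarrow> mtrace (c \<cdot>\<^sub>m A) = c * mtrace A"
  unfolding mtrace_def by (simp add: sum_distrib_left)

lemma mtrace_id_tensor:
  assumes car: "\<forall>X\<in>carrier_mat n n. M X \<in> carrier_mat m m"
    and tp: "\<forall>X\<in>carrier_mat n n. mtrace (M X) = mtrace X"
    and \<rho>: "\<rho> \<in> carrier_mat (r*n) (r*n)"
  shows "mtrace (id_tensor r n m M \<rho>) = mtrace \<rho>"
proof -
  have diag_block: "block n \<rho> x x \<in> carrier_mat n n" for x by (simp add: block_def)
  then have M_block: "M (block n \<rho> x x) \<in> carrier_mat m m" for x using car by blast
  have "mtrace (id_tensor r n m M \<rho>) = (\<Sum>x<r. \<Sum>i<m. id_tensor r n m M \<rho> $$ (x*m+i, x*m+i))"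
    unfolding mtrace_def by (simp add: sum_lessThan_mult)
  also have "\<dots> = (\<Sum>x<r. mtrace (M (block n \<rho> x x)))"
    using M_block[THEN carrier_matD(1)]
    by (auto simp: id_tensor_def mult_add_less_mult mtrace_def intro!: sum.cong)
  also have "\<dots> = (\<Sum>x<r. \<Sum>k<n. \<rho> $$ (x*n+k, x*n+k))"
    using tp diag_block by (simp add: mtrace_def block_def)
  also have "\<dots> = mtrace \<rho>"
    using \<rho> by (simp add: mtrace_def sum_lessThan_mult)
  finally show ?thesis .
qed

lemma mtrace_replace_A:
  assumes "M \<in> carrier_mat (r*(a*b)) (r*(a*b))"
  shows "mtrace (replace_A r a b M) = of_nat a * mtrace M"
proof -
  define F where "F x t j = M $$ (x*(a*b) + (t*b + j), x*(a*b) + (t*b + j))" for x t j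
  have mod_b: "(x*(a*b) + (i*b + j)) mod b = j" if "j < b" for x i j
  proof -
    have "x*(a*b) + (i*b + j) = j + (x*a + i)*b" by (simp add: algebra_simps)
    then show ?thesis using that by (simp only: mod_mult_self1 mod_less)
  qed
  have "mtrace (replace_A r a b M) =
      (\<Sum>x<r. \<Sum>i<a. \<Sum>j<b. replace_A r a b M $$ (x*(a*b) + (i*b+j), x*(a*b) + (i*b+j)))"
    unfolding mtrace_def by (simp add: sum_lessThan_mult)
  also have "\<dots> = (\<Sum>x<r. \<Sum>i<a. \<Sum>j<b. \<Sum>t<a. F x t j)"
    by (intro sum.cong refl)
      (simp add: replace_A_entry mult_add_less_mult F_def mod_b)
  also have "\<dots> = of_nat a * (\<Sum>x<r. \<Sum>t<a. \<Sum>j<b. F x t j)"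
    by (simp add: sum_distrib_left sum.swap[of _ "{..<b}" "{..<a}"])
  also have "(\<Sum>x<r. \<Sum>t<a. \<Sum>j<b. F x t j) = mtrace M"
    using assms by (simp add: mtrace_def F_def sum_lessThan_mult)
  finally show ?thesis .
qed

lemma mtrace_mono_loewner: "loewner_le n A B \<Longrightarrow> mtrace A \<le> mtrace B"
proof -
  assume "loewner_le n A B"
  then have A: "A \<in> carrier_mat n n" and B: "B \<in> carrier_mat n n"
    and "psd_kernel n (\<lambda>i j. (B - A) $$ (i,j))"
    unfolding loewner_le_def psd_iff_psd_kernel by auto
  then have "0 \<le> (\<Sum>i<n. (B - A) $$ (i,i))"
    by (intro sum_nonneg psd_kernel_diag_nonneg) simp_all
  also have "\<dots> = mtrace B - mtrace A"
    using A B by (simp add: mtrace_def sum_subtractf)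
  finally show ?thesis by simp
qed

lemma loewner_le_smult_replace_A_ge:
  assumes le: "loewner_le (r*(a*b)) \<omega> (complex_of_real t \<cdot>\<^sub>m replace_A r a b \<omega>)"
    and tr: "mtrace \<omega> = 1"
  shows "1 \<le> t * real a"
proof -
  have "\<omega> \<in> carrier_mat (r*(a*b)) (r*(a*b))" using le unfolding loewner_le_def by blast
  then have "mtrace (complex_of_real t \<cdot>\<^sub>m replace_A r a b \<omega>) = complex_of_real (t * real a)"
    using tr by (simp add: mtrace_smult[OF replace_A_carrier] mtrace_replace_A)
  then have "1 \<le> complex_of_real (t * real a)"
    using mtrace_mono_loewner[OF le] tr by simp
  then show ?thesis by (simp add: less_eq_complex_def)
qed

lemma D_inf_le_if_feasible_subset:
  assumes sub: "{t. loewner_le n' \<rho>' (complex_of_real t \<cdot>\<^sub>m \<sigma>')} \<subseteq> {t. loewner_le n \<rho> (complex_of_real t \<cdot>\<^sub>m \<sigma>)}"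
    and "c > 0" and lower: "\<And>t. loewner_le n \<rho> (complex_of_real t \<cdot>\<^sub>m \<sigma>) \<Longrightarrow> c \<le> t"
  shows "D_inf n \<rho> \<sigma> \<le> D_inf n' \<rho>' \<sigma>'"
proof -
  define S where "S = {t. loewner_le n \<rho> (complex_of_real t \<cdot>\<^sub>m \<sigma>)}"
  define S' where "S' = {t. loewner_le n' \<rho>' (complex_of_real t \<cdot>\<^sub>m \<sigma>')}"
  show ?thesis
  proof (cases "S' = {}")
    case True
    then show ?thesis unfolding D_inf_def Let_def S'_def[symmetric] by simp
  next
    case False
    then have "S \<noteq> {}" using sub unfolding S_def S'_def by blast
    have "bdd_below S" using lower unfolding S_def bdd_below_def by blast
    moreover have "S' \<subseteq> S" using sub unfolding S_def S'_def .
    ultimately have "Inf S \<le> Inf S'" using False by (intro cInf_superset_mono)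
    moreover have "c \<le> Inf S" using \<open>S \<noteq> {}\<close> lower unfolding S_def by (intro cInf_greatest) auto
    ultimately have "log 2 (Inf S) \<le> log 2 (Inf S')" using \<open>c > 0\<close> by simp
    then show ?thesis
      unfolding D_inf_def Let_def S_def[symmetric] S'_def[symmetric] using \<open>S \<noteq> {}\<close> False by simp
  qed
qed

lemma loewner_le_replace_A_if_choi:
  assumes lin: "is_linear_map n N" and car: "\<forall>X\<in>carrier_mat n n. N X \<in> carrier_mat (a*b) (a*b)"
    and "n > 0"
    and choi: "loewner_le (n*(a*b)) (id_tensor n n (a*b) N (max_ent n))
      (complex_of_real t \<cdot>\<^sub>m replace_A n a b (id_tensor n n (a*b) N (max_ent n)))"
    and \<rho>: "psd (r*n) \<rho>"
  shows "loewner_le (r*(a*b)) (id_tensor r n (a*b) N \<rho>)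
      (complex_of_real t \<cdot>\<^sub>m replace_A r a b (id_tensor r n (a*b) N \<rho>))"
proof -
  let ?M = "\<lambda>X. complex_of_real t \<cdot>\<^sub>m replacer_comp a b N X - N X"
  have car_R: "\<forall>X\<in>carrier_mat n n. replacer_comp a b N X \<in> carrier_mat (a*b) (a*b)"
    unfolding replacer_comp_def using replace_A_carrier[of 1 a b] by simp
  have M_eq: "id_tensor s n (a*b) ?M \<sigma> = complex_of_real t \<cdot>\<^sub>m replace_A s a b (id_tensor s n (a*b) N \<sigma>)
      - id_tensor s n (a*b) N \<sigma>" for s \<sigma>
    using id_tensor_smult_diff[OF car_R car] id_tensor_replacer_comp[OF car] by simp
  have "psd (r*(a*b)) (id_tensor r n (a*b) ?M \<rho>)"
  proof (rule psd_id_tensor_if_psd_choi[OF _ _ \<open>n > 0\<close> _ \<rho>])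
    show "is_linear_map n ?M"
      by (rule is_linear_map_smult_diff[OF is_linear_map_replacer_comp[OF lin car] lin car_R car])
    show "\<forall>X\<in>carrier_mat n n. ?M X \<in> carrier_mat (a*b) (a*b)"
      using car by (auto intro: minus_carrier_mat)
    show "psd (n*(a*b)) (id_tensor n n (a*b) ?M (max_ent n))"
      using choi unfolding M_eq loewner_le_def by blast
  qed
  then show ?thesis
    unfolding M_eq loewner_le_def using id_tensor_carrier replace_A_carrier by auto
qed

lemma D_inf_id_tensor_le_choi:
  assumes lin: "is_linear_map n N" and car: "\<forall>X\<in>carrier_mat n n. N X \<in> carrier_mat (a*b) (a*b)"
    and tp: "\<forall>X\<in>carrier_mat n n. mtrace (N X) = mtrace X"
    and "n > 0" "a > 0" and \<rho>: "\<rho> \<in> states (r*n)"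
  shows "D_inf (r*(a*b)) (id_tensor r n (a*b) N \<rho>) (replace_A r a b (id_tensor r n (a*b) N \<rho>))
      \<le> D_inf (n*(a*b)) (id_tensor n n (a*b) N (max_ent n))
          (replace_A n a b (id_tensor n n (a*b) N (max_ent n)))"
proof (rule D_inf_le_if_feasible_subset)
  show "1 / real a > 0" using \<open>a > 0\<close> by simp
  have \<rho>_psd: "psd (r*n) \<rho>" and "mtrace \<rho> = 1" using \<rho> unfolding states_def by auto
  then have "mtrace (id_tensor r n (a*b) N \<rho>) = 1"
    using mtrace_id_tensor[OF car tp] unfolding psd_def by simp
  then show "1 / real a \<le> t"
    if "loewner_le (r*(a*b)) (id_tensor r n (a*b) N \<rho>)
      (complex_of_real t \<cdot>\<^sub>m replace_A r a b (id_tensor r n (a*b) N \<rho>))" for t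
    using loewner_le_smult_replace_A_ge[OF that] \<open>a > 0\<close> by (simp add: field_simps)
  show "{t. loewner_le (n*(a*b)) (id_tensor n n (a*b) N (max_ent n))
          (complex_of_real t \<cdot>\<^sub>m replace_A n a b (id_tensor n n (a*b) N (max_ent n)))}
      \<subseteq> {t. loewner_le (r*(a*b)) (id_tensor r n (a*b) N \<rho>)
          (complex_of_real t \<cdot>\<^sub>m replace_A r a b (id_tensor r n (a*b) N \<rho>))}"
    using loewner_le_replace_A_if_choi[OF lin car \<open>n > 0\<close> _ \<rho>_psd] by blast
qed

lemma D_inf_chan_replacer_comp_eq_choi:
  assumes N: "is_channel n (a*b) N" and "n > 0" "a > 0"
  shows "D_inf_chan n (a*b) N (replacer_comp a b N) =
    D_inf (n*(a*b)) (id_tensor n n (a*b) N (max_ent n)) (replace_A n a b (id_tensor n n (a*b) N (max_ent n)))"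
proof -
  have lin: "is_linear_map n N" and car: "\<forall>X\<in>carrier_mat n n. N X \<in> carrier_mat (a*b) (a*b)"
    and tp: "\<forall>X\<in>carrier_mat n n. mtrace (N X) = mtrace X"
    using N unfolding is_channel_def is_CP_map_def by auto
  have "(n, max_ent n) \<in> {(r,\<rho>). r > 0 \<and> \<rho> \<in> states (r*n)}"
    using \<open>n > 0\<close> max_ent_state by simp
  then show ?thesis
    unfolding D_inf_chan_def id_tensor_replacer_comp[OF car]
    by (intro antisym SUP_least SUP_upper2)
      (auto intro: D_inf_id_tensor_le_choi[OF lin car tp \<open>n > 0\<close> \<open>a > 0\<close>])
qed

theorem proposition11:
  fixes p q a b :: nat and N :: "complex mat \<Rightarrow> complex mat"
  assumes "p > 0" and "q > 0" and "a > 0" and "b > 0"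
    and "is_channel (p*q) (a*b) N"
  shows "S_NS_inf (p*q) a b N = S_down_inf (p*q) a b (choi_state p q a b N)"
  using D_inf_chan_replacer_comp_eq_choi[OF assms(5)] assms(1-3)
  by (simp add: S_NS_inf_def S_down_inf_def choi_state_def)

end
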